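(* For all integers $n_1,n_2\ge1$ there are polynomials $q_{n_1,n_2}$ (in three variables) and $r_{n_1,n_2}$ (in four variables), all of whose terms have degree exactly $n_1+n_2-2$, such that for all real $a,b,c,d$, $$a^{n_1}c^{n_2}+b^{n_1}d^{n_2}-2\left(\frac{a+b}{2}\right)^{n_1}\left(\frac{c+d}{2}\right)^{n_2}=(a-b)^2q_{n_1,n_2}(a,b,d)+(c-d)^2q_{n_2,n_1}(c,d,b)+(a-b)(c-d)\,r_{n_1,n_2}(a,b,c,d).$$ Moreover, for $n_1=n_2=1$, $q_{1,1}(a,b,d)=0$ and $r_{1,1}(a,b,c,d)=\tfrac12$. *)

theory Defs
  imports Complex_Main
begin

definition hpoly3 :: "nat \<Rightarrow> (nat \<Rightarrow> nat \<Rightarrow> nat \<Rightarrow> real) \<Rightarrow> real \<Rightarrow> real \<Rightarrow> real \<Rightarrow> real" where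
  "hpoly3 N c x y z =
     (\<Sum>(i,j,k) \<in> {(i,j,k). i + j + k = N}. c i j k * x ^ i * y ^ j * z ^ k)"

definition hpoly4 :: "nat \<Rightarrow> (nat \<Rightarrow> nat \<Rightarrow> nat \<Rightarrow> nat \<Rightarrow> real) \<Rightarrow> real \<Rightarrow> real \<Rightarrow> real \<Rightarrow> real \<Rightarrow> real" where
  "hpoly4 N c x y z w =
     (\<Sum>(i,j,k,l) \<in> {(i,j,k,l). i + j + k + l = N}. c i j k l * x ^ i * y ^ j * z ^ k * w ^ l)"

end

theory Submission
  imports Defs "HOL-Library.Product_Plus"
begin

text \<open>Write \<open>m = (a + b)/2\<close>, \<open>M = (c + d)/2\<close>. The left side equals
  \<open>(a^n1 + b^n1 - 2 m^n1) M^n2 + m^n1 (c^n2 + d^n2 - 2 M^n2)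
   + (a^n1 - m^n1)(c^n2 - M^n2) + (b^n1 - m^n1)(d^n2 - M^n2)\<close>.
  Since \<open>x - y\<close> divides \<open>x^n - y^n\<close> and \<open>(x - y)^2\<close> divides the midpoint defect
  \<open>x^n + y^n - 2((x + y)/2)^n\<close>, the first two summands carry \<open>(a - b)^2\<close> resp.
  \<open>(c - d)^2\<close> and the last two carry \<open>(a - b)(c - d)\<close>; expanding \<open>M^n2\<close> around \<open>d\<close>
  and \<open>m^n1\<close> around \<open>b\<close> moves the remainders into the cross term. All quotients are
  built from linear forms by sums, products and powers, hence are homogeneous polynomials.\<close>

definition exponents4 :: "nat \<Rightarrow> (nat \<times> nat \<times> nat \<times> nat) set" where
  "exponents4 N = {(i,j,k,l). i + j + k + l = N}"

definition monomial4 :: "nat \<times> nat \<times> nat \<times> nat \<Rightarrow> real \<Rightarrow> real \<Rightarrow> real \<Rightarrow> real \<Rightarrow> real" where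
  "monomial4 p x y z w = (case p of (i,j,k,l) \<Rightarrow> x ^ i * y ^ j * z ^ k * w ^ l)"

lemma finite_exponents4: "finite (exponents4 N)"
proof (rule finite_subset)
  show "exponents4 N \<subseteq> {..N} \<times> {..N} \<times> {..N} \<times> {..N}"
    unfolding exponents4_def by auto
qed auto

lemma exponents4_add: "p \<in> exponents4 N \<Longrightarrow> q \<in> exponents4 M \<Longrightarrow> p + q \<in> exponents4 (N + M)"
  unfolding exponents4_def by auto

lemma monomial4_add: "monomial4 (p + q) x y z w = monomial4 p x y z w * monomial4 q x y z w"
  by (cases p; cases q) (simp add: monomial4_def power_add algebra_simps)

lemma hpoly4_altdef:
  "hpoly4 N C x y z w = (\<Sum>p\<in>exponents4 N. (case p of (i,j,k,l) \<Rightarrow> C i j k l) * monomial4 p x y z w)"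
  unfolding hpoly4_def exponents4_def monomial4_def
  by (intro sum.cong) (auto simp: algebra_simps)

definition homogeneous4 :: "nat \<Rightarrow> (real \<Rightarrow> real \<Rightarrow> real \<Rightarrow> real \<Rightarrow> real) \<Rightarrow> bool" where
  "homogeneous4 N f \<longleftrightarrow> (\<exists>C. f = hpoly4 N C)"

lemma homogeneous4_cong:
  "homogeneous4 N f \<Longrightarrow> (\<And>x y z w. f x y z w = g x y z w) \<Longrightarrow> homogeneous4 N g"
proof -
  assume "homogeneous4 N f" "\<And>x y z w. f x y z w = g x y z w"
  moreover from this(2) have "f = g" by (intro ext)
  ultimately show ?thesis by simp
qed

lemma homogeneous4_monomial:
  assumes "p \<in> exponents4 N"
  shows "homogeneous4 N (monomial4 p)"
proof -
  have "monomial4 p = hpoly4 N (\<lambda>i j k l. if (i,j,k,l) = p then 1 else 0)"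
    using assms
    by (intro ext)
       (simp add: hpoly4_altdef split_def if_distrib[of "\<lambda>c. c * _"] finite_exponents4 cong: if_cong)
  then show ?thesis unfolding homogeneous4_def by blast
qed

lemma homogeneous4_const: "homogeneous4 0 (\<lambda>x y z w. r)"
proof -
  have "exponents4 0 = {(0,0,0,0)}" unfolding exponents4_def by auto
  then have "(\<lambda>x y z w. r) = hpoly4 0 (\<lambda>i j k l. r)"
    by (intro ext) (simp add: hpoly4_altdef monomial4_def)
  then show ?thesis unfolding homogeneous4_def by blast
qed

lemma homogeneous4_zero: "homogeneous4 N (\<lambda>x y z w. 0)"
  unfolding homogeneous4_def by (rule exI[of _ "\<lambda>i j k l. 0"]) (simp add: hpoly4_def fun_eq_iff)

lemma homogeneous4_add:
  assumes "homogeneous4 N f" "homogeneous4 N g"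
  shows "homogeneous4 N (\<lambda>x y z w. f x y z w + g x y z w)"
proof -
  obtain C D where "f = hpoly4 N C" "g = hpoly4 N D"
    using assms unfolding homogeneous4_def by blast
  then have "(\<lambda>x y z w. f x y z w + g x y z w) = hpoly4 N (\<lambda>i j k l. C i j k l + D i j k l)"
    by (intro ext) (simp add: hpoly4_altdef split_def algebra_simps sum.distrib)
  then show ?thesis unfolding homogeneous4_def by blast
qed

lemma homogeneous4_mult:
  assumes "homogeneous4 N f" "homogeneous4 M g" "N + M = K"
  shows "homogeneous4 K (\<lambda>x y z w. f x y z w * g x y z w)"
proof -
  obtain C D where f: "f = hpoly4 N C" and g: "g = hpoly4 M D"
    using assms unfolding homogeneous4_def by blast
  define c where "c p = (case p of (i,j,k,l) \<Rightarrow> C i j k l)" for p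
  define d where "d p = (case p of (i,j,k,l) \<Rightarrow> D i j k l)" for p
  define e where "e s = (\<Sum>pq | pq \<in> exponents4 N \<times> exponents4 M \<and> fst pq + snd pq = s.
                          c (fst pq) * d (snd pq))" for s
  have "f x y z w * g x y z w = hpoly4 K (\<lambda>i j k l. e (i,j,k,l)) x y z w" for x y z w
  proof -
    let ?m = "\<lambda>p. monomial4 p x y z w"
    have "f x y z w * g x y z w
        = (\<Sum>pq\<in>exponents4 N \<times> exponents4 M. c (fst pq) * d (snd pq) * ?m (fst pq + snd pq))"
      unfolding f g hpoly4_altdef c_def[symmetric] d_def[symmetric] sum_product monomial4_add
      by (simp add: sum.cartesian_product split_def algebra_simps)
    also have "\<dots> = (\<Sum>s\<in>exponents4 K. \<Sum>pq | pq \<in> exponents4 N \<times> exponents4 M \<and> fst pq + snd pq = s.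
                        c (fst pq) * d (snd pq) * ?m (fst pq + snd pq))"
      using assms(3) exponents4_add
      by (intro sum.group[symmetric]) (auto simp: finite_exponents4)
    also have "\<dots> = (\<Sum>s\<in>exponents4 K. e s * ?m s)"
      unfolding e_def sum_distrib_right by (intro sum.cong refl) auto
    finally show ?thesis by (simp add: hpoly4_altdef split_def)
  qed
  then show ?thesis unfolding homogeneous4_def by blast
qed

lemma homogeneous4_scale:
  "homogeneous4 N f \<Longrightarrow> homogeneous4 N (\<lambda>x y z w. r * f x y z w)"
  using homogeneous4_mult[OF homogeneous4_const] by simp

lemma homogeneous4_diff:
  assumes "homogeneous4 N f" "homogeneous4 N g"
  shows "homogeneous4 N (\<lambda>x y z w. f x y z w - g x y z w)"
  using homogeneous4_add[OF assms(1) homogeneous4_scale[OF assms(2), of "-1"]] by simp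

lemma homogeneous4_sum:
  "finite A \<Longrightarrow> (\<And>i. i \<in> A \<Longrightarrow> homogeneous4 N (F i))
    \<Longrightarrow> homogeneous4 N (\<lambda>x y z w. \<Sum>i\<in>A. F i x y z w)"
  by (induction A rule: finite_induct) (auto intro: homogeneous4_zero homogeneous4_add)

lemma homogeneous4_power:
  "homogeneous4 N f \<Longrightarrow> homogeneous4 (k * N) (\<lambda>x y z w. f x y z w ^ k)"
  by (induction k) (auto intro: homogeneous4_mult homogeneous4_const[of 1])

lemma homogeneous4_coordinates:
  shows "homogeneous4 1 (\<lambda>x y z w. x)" and "homogeneous4 1 (\<lambda>x y z w. y)"
    and "homogeneous4 1 (\<lambda>x y z w. z)" and "homogeneous4 1 (\<lambda>x y z w. w)"
  using homogeneous4_monomial[of "(1,0,0,0)" 1] homogeneous4_monomial[of "(0,1,0,0)" 1]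
    homogeneous4_monomial[of "(0,0,1,0)" 1] homogeneous4_monomial[of "(0,0,0,1)" 1]
  by (simp_all add: exponents4_def monomial4_def[abs_def])

text \<open>Setting \<open>w = 0\<close> keeps exactly the monomials free of \<open>w\<close>, as \<open>0 ^ 0 = 1\<close>.\<close>

lemma hpoly4_at_zero: "hpoly4 N C x y z 0 = hpoly3 N (\<lambda>i j k. C i j k 0) x y z"
proof -
  let ?F = "\<lambda>(i,j,k,l). C i j k l * x ^ i * y ^ j * z ^ k * (0::real) ^ l"
  let ?emb = "\<lambda>(i::nat,j::nat,k::nat). (i,j,k,0::nat)"
  have "hpoly4 N C x y z 0 = sum ?F (?emb ` {(i,j,k). i + j + k = N})"
    unfolding hpoly4_def using finite_exponents4[of N]
    by (intro sum.mono_neutral_right) (auto simp: exponents4_def image_iff)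
  also have "\<dots> = hpoly3 N (\<lambda>i j k. C i j k 0) x y z"
    unfolding hpoly3_def by (subst sum.reindex) (auto simp: inj_on_def split_def intro!: sum.cong)
  finally show ?thesis .
qed

lemma homogeneous4_imp_hpoly3:
  assumes "homogeneous4 N (\<lambda>x y z w. f x y z)"
  shows "\<exists>C. \<forall>x y z. f x y z = hpoly3 N C x y z"
proof -
  obtain C where "(\<lambda>x y z w. f x y z) = hpoly4 N C"
    using assms unfolding homogeneous4_def by blast
  then have "f x y z = hpoly3 N (\<lambda>i j k. C i j k 0) x y z" for x y z
    by (metis hpoly4_at_zero)
  then show ?thesis by blast
qed

definition pow_diff_quot :: "nat \<Rightarrow> real \<Rightarrow> real \<Rightarrow> real" where
  "pow_diff_quot n x y = (\<Sum>i<n. y ^ (n - Suc i) * x ^ i)"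

definition midpoint_quot :: "nat \<Rightarrow> real \<Rightarrow> real \<Rightarrow> real" where
  "midpoint_quot n x y = (\<Sum>i<n. ((x + y) / 2) ^ (n - Suc i) * pow_diff_quot i x y) / 2"

lemma pow_diff_eq: "x ^ n - y ^ n = (x - y) * pow_diff_quot n x y"
  unfolding pow_diff_quot_def by (rule power_diff_sumr2)

lemma pow_diff_midpoint:
  shows "x ^ n - ((x + y) / 2) ^ n = (x - y) / 2 * pow_diff_quot n x ((x + y) / 2)"
    and "y ^ n - ((x + y) / 2) ^ n = - ((x - y) / 2) * pow_diff_quot n y ((x + y) / 2)"
    and "((x + y) / 2) ^ n = y ^ n + (x - y) / 2 * pow_diff_quot n ((x + y) / 2) y"
  using pow_diff_eq[of x n "(x + y) / 2"] pow_diff_eq[of y n "(x + y) / 2"]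
    pow_diff_eq[of "(x + y) / 2" n y]
  by (simp_all add: field_simps)

lemma midpoint_defect_eq: "x ^ n + y ^ n - 2 * ((x + y) / 2) ^ n = (x - y)^2 * midpoint_quot n x y"
proof -
  define m where "m = (x + y) / 2"
  have "pow_diff_quot n x m - pow_diff_quot n y m = (\<Sum>i<n. m ^ (n - Suc i) * (x ^ i - y ^ i))"
    unfolding pow_diff_quot_def by (simp add: sum_subtractf algebra_simps)
  also have "\<dots> = (x - y) * (\<Sum>i<n. m ^ (n - Suc i) * pow_diff_quot i x y)"
    unfolding pow_diff_eq sum_distrib_left by (simp add: algebra_simps)
  finally have quot_diff: "pow_diff_quot n x m - pow_diff_quot n y m
      = (x - y) * (\<Sum>i<n. m ^ (n - Suc i) * pow_diff_quot i x y)" .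
  have "x ^ n + y ^ n - 2 * m ^ n = (x ^ n - m ^ n) + (y ^ n - m ^ n)" by simp
  also have "\<dots> = (x - y) / 2 * (pow_diff_quot n x m - pow_diff_quot n y m)"
    unfolding m_def pow_diff_midpoint(1,2) by (simp add: algebra_simps)
  also have "\<dots> = (x - y)^2 * midpoint_quot n x y"
    unfolding quot_diff midpoint_quot_def m_def[symmetric] by (simp add: power2_eq_square)
  finally show ?thesis unfolding m_def .
qed

definition cross_quot :: "nat \<Rightarrow> nat \<Rightarrow> real \<Rightarrow> real \<Rightarrow> real \<Rightarrow> real \<Rightarrow> real" where
  "cross_quot n1 n2 a b c d =
     (a - b) * midpoint_quot n1 a b * pow_diff_quot n2 ((c + d) / 2) d / 2
   + (c - d) * midpoint_quot n2 c d * pow_diff_quot n1 ((a + b) / 2) b / 2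
   + (pow_diff_quot n1 a ((a + b) / 2) * pow_diff_quot n2 c ((c + d) / 2)
      + pow_diff_quot n1 b ((a + b) / 2) * pow_diff_quot n2 d ((c + d) / 2)) / 4"

lemma two_point_defect_eq:
  "a ^ n1 * c ^ n2 + b ^ n1 * d ^ n2 - 2 * ((a + b) / 2) ^ n1 * ((c + d) / 2) ^ n2
   = (a - b)^2 * (d ^ n2 * midpoint_quot n1 a b) + (c - d)^2 * (b ^ n1 * midpoint_quot n2 c d)
     + (a - b) * (c - d) * cross_quot n1 n2 a b c d"
proof -
  define ma where "ma = (a + b) / 2"
  define mc where "mc = (c + d) / 2"
  have "a ^ n1 * c ^ n2 + b ^ n1 * d ^ n2 - 2 * ma ^ n1 * mc ^ n2
     = (a ^ n1 + b ^ n1 - 2 * ma ^ n1) * mc ^ n2 + ma ^ n1 * (c ^ n2 + d ^ n2 - 2 * mc ^ n2)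
       + (a ^ n1 - ma ^ n1) * (c ^ n2 - mc ^ n2) + (b ^ n1 - ma ^ n1) * (d ^ n2 - mc ^ n2)"
    by (simp add: algebra_simps)
  also have "\<dots> = (a - b)^2 * midpoint_quot n1 a b * mc ^ n2 + ma ^ n1 * ((c - d)^2 * midpoint_quot n2 c d)
       + (a - b) * (c - d) / 4 * (pow_diff_quot n1 a ma * pow_diff_quot n2 c mc
                                 + pow_diff_quot n1 b ma * pow_diff_quot n2 d mc)"
    unfolding ma_def mc_def midpoint_defect_eq pow_diff_midpoint(1,2) by (simp add: algebra_simps)
  also have "\<dots> = (a - b)^2 * (d ^ n2 * midpoint_quot n1 a b) + (c - d)^2 * (b ^ n1 * midpoint_quot n2 c d)
     + (a - b) * (c - d) * cross_quot n1 n2 a b c d"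
    unfolding ma_def mc_def pow_diff_midpoint(3) cross_quot_def
    by (simp add: field_simps power2_eq_square)
  finally show ?thesis unfolding ma_def mc_def .
qed

lemma homogeneous4_midpoint:
  "homogeneous4 1 X \<Longrightarrow> homogeneous4 1 Y \<Longrightarrow> homogeneous4 1 (\<lambda>x y z w. (X x y z w + Y x y z w) / 2)"
  using homogeneous4_scale[OF homogeneous4_add, of 1 X Y "1/2"] by simp

lemma homogeneous4_pow_diff_quot:
  assumes "homogeneous4 1 X" "homogeneous4 1 Y"
  shows "homogeneous4 (n - 1) (\<lambda>x y z w. pow_diff_quot n (X x y z w) (Y x y z w))"
  unfolding pow_diff_quot_def
  by (intro homogeneous4_sum homogeneous4_mult[OF homogeneous4_power[OF assms(2)]
        homogeneous4_power[OF assms(1)]]) auto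

lemma homogeneous4_midpoint_quot:
  assumes "homogeneous4 1 X" "homogeneous4 1 Y"
  shows "homogeneous4 (n - 2) (\<lambda>x y z w. midpoint_quot n (X x y z w) (Y x y z w))"
proof -
  have "homogeneous4 (n - 2) (\<lambda>x y z w. ((X x y z w + Y x y z w) / 2) ^ (n - Suc i)
                                       * pow_diff_quot i (X x y z w) (Y x y z w))"
    if "i \<in> {..<n}" for i
  proof (cases "i = 0")
    case True
    then show ?thesis using homogeneous4_zero by (simp add: pow_diff_quot_def)
  next
    case False
    with that show ?thesis
      by (intro homogeneous4_mult[OF homogeneous4_power[OF homogeneous4_midpoint[OF assms]]
            homogeneous4_pow_diff_quot[OF assms]]) auto
  qed
  from homogeneous4_scale[OF homogeneous4_sum[OF finite_lessThan this], where r = "1/2"]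
  show ?thesis by (simp add: midpoint_quot_def)
qed

lemma homogeneous4_midpoint_quot_mult:
  assumes "homogeneous4 1 X" "homogeneous4 1 Y" "homogeneous4 M F" "n \<ge> 1"
  shows "homogeneous4 (n + M - 2) (\<lambda>x y z w. F x y z w * midpoint_quot n (X x y z w) (Y x y z w))"
proof (cases "n = 1")
  case True
  then show ?thesis using homogeneous4_zero by (simp add: midpoint_quot_def pow_diff_quot_def)
next
  case False
  with assms show ?thesis
    by (intro homogeneous4_mult[OF assms(3) homogeneous4_midpoint_quot]) auto
qed

lemma homogeneous4_cross_quot:
  assumes "n1 \<ge> 1" "n2 \<ge> 1"
  shows "homogeneous4 (n1 + n2 - 2) (cross_quot n1 n2)"
proof -
  note coord = homogeneous4_coordinates
  have mid_ab: "homogeneous4 1 (\<lambda>a b c d. (a + b) / 2)"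
    and mid_cd: "homogeneous4 1 (\<lambda>a b c d. (c + d) / 2)"
    using homogeneous4_midpoint[OF coord(1,2)] homogeneous4_midpoint[OF coord(3,4)] by simp_all
  have diff_pow_ab: "homogeneous4 (1 + (n2 - 1)) (\<lambda>a b c d. (a - b) * pow_diff_quot n2 ((c + d) / 2) d)"
    by (rule homogeneous4_mult[OF homogeneous4_diff[OF coord(1,2)]
          homogeneous4_pow_diff_quot[OF mid_cd coord(4)] refl])
  have diff_pow_cd: "homogeneous4 (1 + (n1 - 1)) (\<lambda>a b c d. (c - d) * pow_diff_quot n1 ((a + b) / 2) b)"
    by (rule homogeneous4_mult[OF homogeneous4_diff[OF coord(3,4)]
          homogeneous4_pow_diff_quot[OF mid_ab coord(2)] refl])
  have square_ab: "homogeneous4 (n1 + n2 - 2) (\<lambda>a b c d.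
          (a - b) * pow_diff_quot n2 ((c + d) / 2) d * midpoint_quot n1 a b)"
    using homogeneous4_midpoint_quot_mult[OF coord(1,2) diff_pow_ab assms(1)] assms by simp
  have square_cd: "homogeneous4 (n1 + n2 - 2) (\<lambda>a b c d.
          (c - d) * pow_diff_quot n1 ((a + b) / 2) b * midpoint_quot n2 c d)"
    using homogeneous4_midpoint_quot_mult[OF coord(3,4) diff_pow_cd assms(2)] assms
    by (simp add: add.commute)
  have products: "homogeneous4 (n1 + n2 - 2) (\<lambda>a b c d.
          pow_diff_quot n1 a ((a + b) / 2) * pow_diff_quot n2 c ((c + d) / 2)
          + pow_diff_quot n1 b ((a + b) / 2) * pow_diff_quot n2 d ((c + d) / 2))"
    using assms
    by (intro homogeneous4_add homogeneous4_mult[OF homogeneous4_pow_diff_quot homogeneous4_pow_diff_quot]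
          coord mid_ab mid_cd) auto
  from homogeneous4_add[OF homogeneous4_add[OF homogeneous4_scale[OF square_ab, where r = "1/2"]
        homogeneous4_scale[OF square_cd, where r = "1/2"]] homogeneous4_scale[OF products, where r = "1/4"]]
  show ?thesis
    by (rule homogeneous4_cong) (simp add: cross_quot_def field_simps)
qed

theorem lemmaA5:
  shows "\<exists>(Q :: nat \<Rightarrow> nat \<Rightarrow> nat \<Rightarrow> nat \<Rightarrow> nat \<Rightarrow> real)
           (R :: nat \<Rightarrow> nat \<Rightarrow> nat \<Rightarrow> nat \<Rightarrow> nat \<Rightarrow> nat \<Rightarrow> real).
     (\<forall>n1 n2 (a::real) b c d. n1 \<ge> 1 \<longrightarrow> n2 \<ge> 1 \<longrightarrow>
        a ^ n1 * c ^ n2 + b ^ n1 * d ^ n2 - 2 * ((a + b) / 2) ^ n1 * ((c + d) / 2) ^ n2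
        = (a - b)^2 * hpoly3 (n1 + n2 - 2) (Q n1 n2) a b d
          + (c - d)^2 * hpoly3 (n1 + n2 - 2) (Q n2 n1) c d b
          + (a - b) * (c - d) * hpoly4 (n1 + n2 - 2) (R n1 n2) a b c d)
     \<and> (\<forall>a b d. hpoly3 0 (Q 1 1) a b d = 0)
     \<and> (\<forall>a b c d. hpoly4 0 (R 1 1) a b c d = 1 / 2)"
proof -
  have "\<exists>C. n1 \<ge> 1 \<longrightarrow> n2 \<ge> 1 \<longrightarrow>
          (\<forall>x y z. z ^ n2 * midpoint_quot n1 x y = hpoly3 (n1 + n2 - 2) C x y z)" for n1 n2
    using homogeneous4_imp_hpoly3[OF homogeneous4_midpoint_quot_mult[OF
          homogeneous4_coordinates(1,2) homogeneous4_power[OF homogeneous4_coordinates(3)]]]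
    by (simp add: add.commute)
  then obtain Q where Q: "\<And>n1 n2 x y z. n1 \<ge> 1 \<Longrightarrow> n2 \<ge> 1 \<Longrightarrow>
      hpoly3 (n1 + n2 - 2) (Q n1 n2) x y z = z ^ n2 * midpoint_quot n1 x y"
    by metis
  have "\<exists>C. n1 \<ge> 1 \<longrightarrow> n2 \<ge> 1 \<longrightarrow> cross_quot n1 n2 = hpoly4 (n1 + n2 - 2) C" for n1 n2
    using homogeneous4_cross_quot unfolding homogeneous4_def by blast
  then obtain R where R: "\<And>n1 n2. n1 \<ge> 1 \<Longrightarrow> n2 \<ge> 1 \<Longrightarrow>
      hpoly4 (n1 + n2 - 2) (R n1 n2) = cross_quot n1 n2"
    by metis
  show ?thesis
  proof (intro exI[of _ Q] exI[of _ R] conjI allI impI)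
    fix n1 n2 :: nat and a b c d :: real
    assume "n1 \<ge> 1" "n2 \<ge> 1"
    moreover from this have "hpoly3 (n1 + n2 - 2) (Q n2 n1) c d b = b ^ n1 * midpoint_quot n2 c d"
      using Q[of n2 n1] by (simp add: add.commute)
    ultimately show "a ^ n1 * c ^ n2 + b ^ n1 * d ^ n2 - 2 * ((a + b) / 2) ^ n1 * ((c + d) / 2) ^ n2
        = (a - b)^2 * hpoly3 (n1 + n2 - 2) (Q n1 n2) a b d
          + (c - d)^2 * hpoly3 (n1 + n2 - 2) (Q n2 n1) c d b
          + (a - b) * (c - d) * hpoly4 (n1 + n2 - 2) (R n1 n2) a b c d"
      by (simp add: Q R two_point_defect_eq)
  next
    fix a b d :: real
    show "hpoly3 0 (Q 1 1) a b d = 0"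
      using Q[of 1 1] by (simp add: midpoint_quot_def pow_diff_quot_def)
  next
    fix a b c d :: real
    show "hpoly4 0 (R 1 1) a b c d = 1 / 2"
      using R[of 1 1] by (simp add: cross_quot_def midpoint_quot_def pow_diff_quot_def)
  qed
qed

end
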